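(* Let $0<\gamma<1$ and let the coefficients $l_k^{2,\gamma}$ be defined by $\left((1-\zeta)+\tfrac12(1-\zeta)^2\right)^{\gamma}=\sum_{k=0}^\infty l_k^{2,\gamma}\zeta^k$ (equivalently $l_m^{2,\gamma}=(3/2)^{\gamma}\sum_{k=0}^{m}3^{-k}g_k^\gamma g_{m-k}^\gamma$ with $g_k^\gamma=(-1)^k\binom{\gamma}{k}$). Then $$g(\gamma,z)=\sum_{k=1}^\infty l_k^{2,\gamma}\left(\cos(kz)-1\right)\ge0\quad\text{for all } z\in[0,\pi].$$ *)

theory Defs
  imports Complex_Main
begin

definition gcoef :: "real \<Rightarrow> nat \<Rightarrow> real" where
  "gcoef \<gamma> k = (-1) ^ k * (\<gamma> gchoose k)"

text \<open>Coefficients of ((1-x) + (1/2)(1-x)^2)^gamma, via the explicit formula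
  l_m = (3/2)^gamma * sum_{k=0}^m 3^(-k) g_k g_(m-k).\<close>
definition lcoef :: "real \<Rightarrow> nat \<Rightarrow> real" where
  "lcoef \<gamma> m = (3/2) powr \<gamma> * (\<Sum>k=0..m. (1/3) ^ k * gcoef \<gamma> k * gcoef \<gamma> (m - k))"

end

theory Submission
  imports Defs "HOL-Analysis.Analysis"
begin

text \<open>
  The coefficients \<open>gcoef \<gamma> k\<close> of \<open>(1 - w) powr \<gamma>\<close> are absolutely summable for
  \<open>0 \<le> \<gamma> \<le> 1\<close> (all but the first are \<open>\<le> 0\<close>, and their partial sums are \<open>\<ge> 0\<close>), so the
  binomial series converges to \<open>(1 - w) powr \<gamma>\<close> on the whole closed unit disc, and by the
  Cauchy product \<open>\<Sum> lcoef \<gamma> m * w^m = (3/2) powr \<gamma> * (1 - w/3) powr \<gamma> * (1 - w) powr \<gamma>\<close>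
  there. At \<open>w = 1\<close> this gives \<open>\<Sum> lcoef \<gamma> m = 0\<close>, and at \<open>w = cis z\<close> the real part gives
  \<open>\<Sum> lcoef \<gamma> m * cos (m z)\<close>. Hence the series in question equals
  \<open>(3/2) powr \<gamma> * Re (((1 - w/3) * (1 - w)) powr \<gamma>)\<close>, and since
  \<open>Re ((1 - w/3) * (1 - w)) = 2/3 * (1 - cos z)\<^sup>2 \<ge> 0\<close>, the argument of the product lies in
  \<open>[-pi/2, pi/2]\<close> and stays there after multiplication by \<open>\<gamma> < 1\<close>.
\<close>

lemma gchoose_of_real: "(of_real a :: 'a::{real_field,field_char_0}) gchoose k = of_real (a gchoose k)"
proof -
  have "pochhammer (- of_real a) k = (of_real (pochhammer (- a) k) :: 'a)"
    by (simp add: pochhammer_of_real flip: of_real_minus)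
  then show ?thesis by (simp add: gbinomial_pochhammer)
qed

lemma gcoef_Suc: "gcoef a (Suc k) = (real k - a) / (real k + 1) * gcoef a k"
proof -
  have "a gchoose Suc k = (a - real k) / (real k + 1) * (a gchoose k)"
    using gbinomial_mult_1[of a k] by (simp add: field_simps)
  then show ?thesis by (simp add: gcoef_def algebra_simps)
qed

lemma gcoef_Suc_absorption: "gcoef a (Suc k) = - a / (real k + 1) * gcoef (a - 1) k"
proof -
  have "a gchoose Suc k = a / (real k + 1) * (a - 1 gchoose k)"
    using gbinomial_absorption[of k a] by (simp add: field_simps)
  then show ?thesis by (simp add: gcoef_def)
qed

lemma gcoef_nonneg:
  assumes "a \<le> 0" shows "gcoef a k \<ge> 0"
proof (induction k)
  case (Suc k)
  then show ?case using assms by (simp add: gcoef_Suc)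
qed (simp add: gcoef_def)

lemma sum_gcoef_atMost: "(\<Sum>k\<le>m. gcoef a k) = gcoef (a - 1) m"
  using gbinomial_sum_lower_neg[of a m] by (simp add: gcoef_def mult.commute)

lemma gcoef_Suc_nonpos:
  assumes "0 \<le> a" "a \<le> 1" shows "gcoef a (Suc k) \<le> 0"
  using gcoef_nonneg[of "a - 1" k] assms by (simp add: gcoef_Suc_absorption divide_nonpos_nonneg mult_nonpos_nonneg)

lemma summable_abs_gcoef:
  assumes "0 \<le> a" "a \<le> 1" shows "summable (\<lambda>k. \<bar>gcoef a k\<bar>)"
proof (rule bounded_imp_summable[where B = 2])
  fix n
  have "\<bar>gcoef a k\<bar> = (if k = 0 then 2 else 0) - gcoef a k" for k
    using gcoef_Suc_nonpos[OF assms, of "k - 1"] by (cases k) (auto simp: gcoef_def)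
  then have "(\<Sum>k\<le>n. \<bar>gcoef a k\<bar>) = 2 - gcoef (a - 1) n"
    by (simp add: sum_subtractf flip: sum_gcoef_atMost)
  then show "(\<Sum>k\<le>n. \<bar>gcoef a k\<bar>) \<le> 2"
    using gcoef_nonneg[of "a - 1" n] assms by linarith
qed simp

lemma gcoef_sums_powr_open_disc:
  assumes "norm (w::complex) < 1"
  shows "(\<lambda>k. of_real (gcoef a k) * w^k) sums ((1 - w) powr of_real a)"
proof -
  have "(\<lambda>k. (of_real a gchoose k) * (-w)^k) sums (1 + (-w)) powr of_real a"
    by (rule gen_binomial_complex) (use assms in simp)
  moreover have "(of_real a gchoose k) * (-w)^k = of_real (gcoef a k) * w^k" for k
    unfolding gchoose_of_real power_minus[of w] gcoef_def by simp
  ultimately show ?thesis by simp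
qed

lemma summable_norm_powser_cball:
  fixes c :: "nat \<Rightarrow> 'a::real_normed_div_algebra"
  assumes "summable (\<lambda>k. norm (c k))" "norm w \<le> 1"
  shows "summable (\<lambda>k. norm (c k * w^k))"
proof (rule summable_comparison_test'[OF assms(1)])
  show "norm (norm (c k * w^k)) \<le> norm (c k)" for k
    using assms(2) by (simp add: norm_mult norm_power mult_left_le power_le_one)
qed

lemma powser_sums_boundary_of_summable_norm:
  fixes c :: "nat \<Rightarrow> 'a::{real_normed_field,banach}"
  assumes summable: "summable (\<lambda>k. norm (c k))"
    and sums_inside: "\<And>x. norm x < 1 \<Longrightarrow> (\<lambda>k. c k * x^k) sums f x"
    and w: "norm w \<le> 1"
    and radial: "((\<lambda>r. f (of_real r * w)) \<longlongrightarrow> f w) (at_left 1)"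
  shows "(\<lambda>k. c k * w^k) sums f w"
proof -
  define F where "F x = (\<Sum>k. c k * x^k)" for x
  have partial_sums_uniform: "uniform_limit (cball 0 1) (\<lambda>n x. \<Sum>k<n. c k * x^k) F sequentially"
    unfolding F_def by (rule Weierstrass_m_test[OF _ summable])
      (auto simp: norm_mult norm_power intro!: mult_left_le power_le_one)
  have F_cont: "continuous_on (cball 0 1) F"
    by (rule uniform_limit_theorem[OF _ partial_sums_uniform])
      (intro always_eventually allI continuous_intros, simp)
  have radius: "norm (of_real r * w) < 1" if "r \<in> {0<..<1}" for r
  proof -
    have "norm (of_real r * w) = r * norm w" using that by (simp add: norm_mult)
    also have "\<dots> \<le> r" using that w by (simp add: mult_left_le)
    finally show ?thesis using that by simp
  qed
  have inside: "eventually (\<lambda>r. norm (of_real r * w) < 1) (at_left (1::real))"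
    by (rule eventually_at_leftI[of 0]) (use radius in auto)
  have "((\<lambda>r. F (of_real r * w)) \<longlongrightarrow> F w) (at_left 1)"
  proof (rule continuous_on_tendsto_compose[OF F_cont])
    show "((\<lambda>r. of_real r * w) \<longlongrightarrow> w) (at_left 1)"
      using tendsto_mult_right[OF tendsto_of_real[OF tendsto_ident_at], of w 1 "{..<1}"] by simp
    show "eventually (\<lambda>r. of_real r * w \<in> cball 0 1) (at_left 1)"
      using inside by eventually_elim simp
  qed (use w in simp)
  moreover have "eventually (\<lambda>r. F (of_real r * w) = f (of_real r * w)) (at_left 1)"
    using inside by eventually_elim (use sums_inside in \<open>simp add: F_def sums_iff\<close>)
  ultimately have "((\<lambda>r. f (of_real r * w)) \<longlongrightarrow> F w) (at_left 1)"
    by (rule Lim_transform_eventually)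
  then have "F w = f w"
    using radial by (rule tendsto_unique[OF trivial_limit_at_left_real])
  moreover have "summable (\<lambda>k. c k * w^k)"
    by (rule summable_norm_cancel[OF summable_norm_powser_cball[OF summable w]])
  ultimately show ?thesis by (simp add: F_def sums_iff)
qed

lemma Re_one_minus_pos_in_cball:
  assumes "norm (w::complex) \<le> 1" "w \<noteq> 1"
  shows "0 < Re (1 - w)"
proof (rule ccontr)
  assume "\<not> 0 < Re (1 - w)"
  then have Re_w: "Re w = 1"
    using abs_Re_le_cmod[of w] assms(1) by simp
  have "(Re w)\<^sup>2 + (Im w)\<^sup>2 \<le> 1"
    using assms(1) by (metis cmod_power2 norm_ge_zero power_le_one)
  then have "Im w = 0" using Re_w by simp
  with Re_w assms(2) show False by (simp add: complex_eq_iff)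
qed

lemma gcoef_sums_powr:
  assumes "0 < a" "a \<le> 1" "norm (w::complex) \<le> 1"
  shows "(\<lambda>k. of_real (gcoef a k) * w^k) sums ((1 - w) powr of_real a)"
proof (rule powser_sums_boundary_of_summable_norm[OF _ gcoef_sums_powr_open_disc assms(3)])
  show "summable (\<lambda>k. norm (complex_of_real (gcoef a k)))"
    using summable_abs_gcoef assms(1,2) by simp
  have "1 - w \<notin> \<real>\<^sub>\<le>\<^sub>0 \<or> (1 - w = 0 \<and> 0 < Re (of_real a))"
    using Re_one_minus_pos_in_cball[OF assms(3)] assms(1) by (cases "w = 1") (auto simp: complex_nonpos_Reals_iff)
  then show "((\<lambda>r. (1 - of_real r * w) powr of_real a) \<longlongrightarrow> (1 - w) powr of_real a) (at_left 1)"
    by (rule tendsto_powr_complex') (auto intro!: tendsto_eq_intros)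
qed

lemma lcoef_sums_powr:
  assumes "0 < a" "a \<le> 1" "norm (w::complex) \<le> 1"
  shows "(\<lambda>m. of_real (lcoef a m) * w^m) sums
           (of_real ((3/2) powr a) * ((1 - w/3) powr of_real a * (1 - w) powr of_real a))"
proof -
  have w3: "norm (w/3) \<le> 1" using assms(3) by (simp add: norm_divide)
  have summable_norm: "summable (\<lambda>k. norm (of_real (gcoef a k) * x^k))" if "norm x \<le> 1" for x :: complex
    using summable_norm_powser_cball[OF _ that] summable_abs_gcoef assms(1,2) by simp
  have "(\<lambda>m. \<Sum>k\<le>m. of_real (gcoef a k) * (w/3)^k * (of_real (gcoef a (m - k)) * w^(m - k)))
          sums ((1 - w/3) powr of_real a * (1 - w) powr of_real a)"
    using Cauchy_product_sums[OF summable_norm[OF w3] summable_norm[OF assms(3)]]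
      gcoef_sums_powr[OF assms(1,2) w3] gcoef_sums_powr[OF assms] by (simp add: sums_iff)
  moreover have "(\<Sum>k\<le>m. of_real (gcoef a k) * (w/3)^k * (of_real (gcoef a (m - k)) * w^(m - k)))
      = of_real (\<Sum>k=0..m. (1/3) ^ k * gcoef a k * gcoef a (m - k)) * w^m" for m
  proof -
    have "of_real (gcoef a k) * (w/3)^k * (of_real (gcoef a (m - k)) * w^(m - k))
        = of_real ((1/3) ^ k * gcoef a k * gcoef a (m - k)) * w^m" if "k \<le> m" for k
    proof -
      have "w^k * w^(m - k) = w^m" using that by (simp flip: power_add)
      then show ?thesis by (simp add: power_divide field_simps)
    qed
    then show ?thesis
      by (simp add: sum_distrib_right atLeast0AtMost del: of_real_mult)
  qed
  ultimately show ?thesis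
    unfolding lcoef_def by (simp add: sums_mult mult.assoc)
qed

lemma powr_mult_complex_Re_pos:
  fixes u v a :: complex
  assumes "0 < Re u" "0 \<le> Re v"
  shows "u powr a * v powr a = (u * v) powr a"
proof (cases "v = 0")
  case False
  have "u \<noteq> 0" using assms(1) by auto
  moreover have "Ln (u * v) = Ln u + Ln v"
    using Re_Ln_pos_lt_imp[OF assms(1)] Re_Ln_pos_le[OF False] assms(2) \<open>u \<noteq> 0\<close> False
    by (intro Ln_times_simple) auto
  ultimately show ?thesis
    using False by (simp add: powr_def exp_add distrib_left)
qed simp

lemma Re_powr_of_real_nonneg:
  fixes w :: complex
  assumes "0 \<le> Re w" "0 \<le> a" "a \<le> 1"
  shows "0 \<le> Re (w powr of_real a)"
proof (cases "w = 0")
  case False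
  have "\<bar>Im (Ln w)\<bar> \<le> pi/2" using Re_Ln_pos_le[OF False] assms(1) by simp
  moreover have "a * \<bar>Im (Ln w)\<bar> \<le> \<bar>Im (Ln w)\<bar>"
    using assms(2,3) by (simp add: mult_left_le_one_le)
  ultimately have "\<bar>a * Im (Ln w)\<bar> \<le> pi/2"
    using assms(2) by (simp add: abs_mult)
  then have "0 \<le> cos (a * Im (Ln w))" by (intro cos_ge_zero) auto
  then show ?thesis using False by (simp add: powr_def Re_exp)
qed simp

lemma Re_binomial_product_on_circle_nonneg:
  assumes "0 \<le> a" "a \<le> 1"
  shows "0 \<le> Re ((1 - cis z / 3) powr of_real a * (1 - cis z) powr of_real a)"
proof -
  have Re_u: "0 < Re (1 - cis z / 3)"
    by (rule Re_one_minus_pos_in_cball) (auto simp: norm_divide dest: arg_cong[where f = norm])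
  have Re_v: "0 \<le> Re (1 - cis z)" by simp
  have "Re ((1 - cis z / 3) * (1 - cis z)) = (1 - cos z / 3) * (1 - cos z) - sin z / 3 * sin z"
    by simp
  also have "\<dots> = 2/3 * (1 - cos z)\<^sup>2"
    using sin_cos_squared_add3[of z] by algebra
  finally have Re_uv: "Re ((1 - cis z / 3) * (1 - cis z)) = 2/3 * (1 - cos z)\<^sup>2" .
  have "0 \<le> Re ((1 - cis z / 3) * (1 - cis z))"
    unfolding Re_uv by simp
  then show ?thesis
    unfolding powr_mult_complex_Re_pos[OF Re_u Re_v] using assms by (rule Re_powr_of_real_nonneg)
qed

theorem lemma3p6:
  fixes \<gamma> z :: real
  assumes "0 < \<gamma>" and "\<gamma> < 1" and "0 \<le> z" and "z \<le> pi"
  shows "summable (\<lambda>k. lcoef \<gamma> (Suc k) * (cos (real (Suc k) * z) - 1))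
       \<and> (\<Sum>k. lcoef \<gamma> (Suc k) * (cos (real (Suc k) * z) - 1)) \<ge> 0"
proof -
  define H where "H = (1 - cis z / 3) powr of_real \<gamma> * (1 - cis z) powr of_real \<gamma>"
  have "(\<lambda>m. Re (of_real (lcoef \<gamma> m) * cis z ^ m)) sums Re (of_real ((3/2) powr \<gamma>) * H)"
    using lcoef_sums_powr[of \<gamma> "cis z"] assms(1,2) unfolding sums_complex_iff H_def by simp
  then have "(\<lambda>m. lcoef \<gamma> m * cos (real m * z)) sums ((3/2) powr \<gamma> * Re H)"
    by (simp add: cos_n_Re_cis_pow_n)
  moreover have "lcoef \<gamma> sums 0"
    using lcoef_sums_powr[of \<gamma> 1] assms(1,2) by (simp add: sums_complex_iff)
  ultimately have "(\<lambda>m. lcoef \<gamma> m * (cos (real m * z) - 1)) sums ((3/2) powr \<gamma> * Re H)"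
    using sums_diff by (fastforce simp: right_diff_distrib)
  then have "(\<lambda>k. lcoef \<gamma> (Suc k) * (cos (real (Suc k) * z) - 1)) sums ((3/2) powr \<gamma> * Re H)"
    by (subst sums_Suc_iff) simp
  moreover have "0 \<le> Re H"
    unfolding H_def using Re_binomial_product_on_circle_nonneg assms(1,2) by simp
  ultimately show ?thesis by (simp add: sums_iff)
qed

end
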